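(* Let $\ell\ge2$ and let $G$ be an $N$-AW graph. Then every vertex of degree $d\ge 2$ in $\overline{G}$ has at least $d-1$ neighbors (in $\overline{G}$) of degree at least $2$ in $\overline{G}$.
   Context: All graphs are finite and simple; $\overline{G}$ is the complement. Labels lie in $\mathbb{Z}_\ell$. In the neighborhood Lights Out game, toggling a vertex $w$ adds $1$ (mod $\ell$) to the label of each vertex of the closed neighborhood $N[w]$; the game is won when all labels are $0$; a graph is $N$-AW if every initial labeling can be won. *)

theory Defs
  imports Main
begin

definition simple_graph :: "'a set \<Rightarrow> ('a \<Rightarrow> 'a \<Rightarrow> bool) \<Rightarrow> bool" where
  "simple_graph V E \<longleftrightarrow> finite V \<and> (\<forall>u v. E u v \<longrightarrow> u \<in> V \<and> v \<in> V)
     \<and> (\<forall>u v. E u v \<longrightarrow> E v u) \<and> (\<forall>v. \<not> E v v)"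

definition closed_nbhd :: "'a set \<Rightarrow> ('a \<Rightarrow> 'a \<Rightarrow> bool) \<Rightarrow> 'a \<Rightarrow> 'a set" where
  "closed_nbhd V E w = insert w {u \<in> V. E w u}"

definition compl_edge :: "'a set \<Rightarrow> ('a \<Rightarrow> 'a \<Rightarrow> bool) \<Rightarrow> 'a \<Rightarrow> 'a \<Rightarrow> bool" where
  "compl_edge V E u v \<longleftrightarrow> u \<in> V \<and> v \<in> V \<and> u \<noteq> v \<and> \<not> E u v"

definition degree :: "'a set \<Rightarrow> ('a \<Rightarrow> 'a \<Rightarrow> bool) \<Rightarrow> 'a \<Rightarrow> nat" where
  "degree V E v = card {u \<in> V. E v u}"

text \<open>Labels in Z_l are represented by integers modulo l. Toggling vertex w
  (t w times) adds t w to each label in N[w]; the game is won when every label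
  is 0 mod l.\<close>
definition N_AW :: "nat \<Rightarrow> 'a set \<Rightarrow> ('a \<Rightarrow> 'a \<Rightarrow> bool) \<Rightarrow> bool" where
  "N_AW l V E \<longleftrightarrow> (\<forall>lab :: 'a \<Rightarrow> int. \<exists>t :: 'a \<Rightarrow> nat.
      \<forall>v\<in>V. (lab v + (\<Sum>w\<in>V. if v \<in> closed_nbhd V E w then int (t w) else 0))
              mod int l = 0)"

end

theory Submission
  imports Defs
begin

text \<open>A vertex u that is adjacent in the complement to v and to nothing else lies in N[w]
  exactly for the vertices w \<noteq> v. Two such vertices would be closed twins: every toggle
  changes both labels by the same amount, so the labeling that is 1 at one of them and 0
  elsewhere could never be won. Hence at most one complement-neighbour of v has
  complement-degree 1, and all others have complement-degree at least 2.\<close>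

lemma N_AW_closed_twins_eq:
  assumes "l \<ge> 2" and "N_AW l V E" and "u1 \<in> V" and "u2 \<in> V"
    and twins: "\<And>w. w \<in> V \<Longrightarrow> u1 \<in> closed_nbhd V E w \<longleftrightarrow> u2 \<in> closed_nbhd V E w"
  shows "u1 = u2"
proof (rule ccontr)
  assume "u1 \<noteq> u2"
  define lab :: "'a \<Rightarrow> int" where "lab = (\<lambda>x. if x = u1 then 1 else 0)"
  obtain t :: "'a \<Rightarrow> nat" where won:
    "\<And>x. x \<in> V \<Longrightarrow> (lab x + (\<Sum>w\<in>V. if x \<in> closed_nbhd V E w then int (t w) else 0)) mod int l = 0"
    using \<open>N_AW l V E\<close> unfolding N_AW_def by blast
  define toggles where "toggles = (\<Sum>w\<in>V. if u1 \<in> closed_nbhd V E w then int (t w) else 0)"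
  have "(\<Sum>w\<in>V. if u2 \<in> closed_nbhd V E w then int (t w) else 0) = toggles"
    unfolding toggles_def using twins by (intro sum.cong) auto
  then have "toggles mod int l = 0"
    using won[OF \<open>u2 \<in> V\<close>] \<open>u1 \<noteq> u2\<close> by (simp add: lab_def)
  moreover have "(1 + toggles) mod int l = 0"
    using won[OF \<open>u1 \<in> V\<close>] by (simp add: lab_def toggles_def)
  ultimately have "1 mod int l = 0"
    by (metis add.right_neutral mod_add_cong mod_mod_trivial)
  then show False
    using \<open>l \<ge> 2\<close> by simp
qed

lemma compl_edge_sym:
  assumes "simple_graph V E" and "compl_edge V E u v"
  shows "compl_edge V E v u"
  using assms unfolding simple_graph_def compl_edge_def by blast

lemma compl_nbrs_eq_singleton:
  assumes "simple_graph V E" and "compl_edge V E v u"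
    and "degree V (compl_edge V E) u \<le> 1"
  shows "{y \<in> V. compl_edge V E u y} = {v}"
proof -
  have "finite V"
    using assms(1) unfolding simple_graph_def by blast
  then have "\<forall>a \<in> {y \<in> V. compl_edge V E u y}. \<forall>b \<in> {y \<in> V. compl_edge V E u y}. a = b"
    using assms(3) unfolding degree_def by (simp add: card_le_Suc0_iff_eq)
  moreover have "v \<in> {y \<in> V. compl_edge V E u y}"
    using compl_edge_sym[OF assms(1,2)] unfolding compl_edge_def by simp
  ultimately show ?thesis
    by blast
qed

lemma mem_closed_nbhd_iff_if_compl_nbrs_singleton:
  assumes "simple_graph V E" and "u \<in> V" and "w \<in> V"
    and "{y \<in> V. compl_edge V E u y} = {v}"
  shows "u \<in> closed_nbhd V E w \<longleftrightarrow> w \<noteq> v"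
proof -
  have "u \<in> closed_nbhd V E w \<longleftrightarrow> w = u \<or> E u w"
    using assms(1,2) unfolding closed_nbhd_def simple_graph_def by blast
  also have "\<dots> \<longleftrightarrow> \<not> compl_edge V E u w"
    using assms(2,3) unfolding compl_edge_def by blast
  also have "\<dots> \<longleftrightarrow> w \<noteq> v"
    using assms(3,4) by blast
  finally show ?thesis .
qed

lemma N_AW_compl_degree_one_unique:
  assumes "l \<ge> 2" and "simple_graph V E" and "N_AW l V E"
    and "compl_edge V E v u1" "degree V (compl_edge V E) u1 \<le> 1"
    and "compl_edge V E v u2" "degree V (compl_edge V E) u2 \<le> 1"
  shows "u1 = u2"
proof (rule N_AW_closed_twins_eq[OF assms(1,3)])
  show "u1 \<in> V" "u2 \<in> V"
    using assms(4,6) unfolding compl_edge_def by auto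
  fix w assume "w \<in> V"
  then show "u1 \<in> closed_nbhd V E w \<longleftrightarrow> u2 \<in> closed_nbhd V E w"
    using assms(2,4-7) \<open>u1 \<in> V\<close> \<open>u2 \<in> V\<close>
    by (simp add: compl_nbrs_eq_singleton mem_closed_nbhd_iff_if_compl_nbrs_singleton)
qed

lemma card_le_card_Diff_le_one:
  assumes "finite S" and "T \<subseteq> S" and "\<And>a b. a \<in> S - T \<Longrightarrow> b \<in> S - T \<Longrightarrow> a = b"
  shows "card S - 1 \<le> card T"
proof -
  have "card (S - T) \<le> 1"
    using assms(1,3) by (simp add: card_le_Suc0_iff_eq)
  moreover have "card S = card T + card (S - T)"
    using assms(1,2) by (metis card_Diff_subset card_mono finite_subset le_add_diff_inverse)
  ultimately show ?thesis
    by linarith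
qed

theorem lemma4p13:
  fixes l :: nat and V :: "'a set" and E :: "'a \<Rightarrow> 'a \<Rightarrow> bool" and v :: 'a
  assumes "l \<ge> 2"
    and "simple_graph V E"
    and "N_AW l V E"
    and "v \<in> V"
    and "degree V (compl_edge V E) v \<ge> 2"
  shows "card {u \<in> V. compl_edge V E v u \<and> degree V (compl_edge V E) u \<ge> 2}
           \<ge> degree V (compl_edge V E) v - 1"
proof -
  define S where "S = {u \<in> V. compl_edge V E v u}"
  define T where "T = {u \<in> V. compl_edge V E v u \<and> degree V (compl_edge V E) u \<ge> 2}"
  have "finite S"
    using assms(2) unfolding S_def simple_graph_def by simp
  moreover have "T \<subseteq> S"
    unfolding S_def T_def by auto
  moreover have "a = b" if "a \<in> S - T" "b \<in> S - T" for a b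
    using that N_AW_compl_degree_one_unique[OF assms(1-3), of v a b]
    unfolding S_def T_def by (auto simp: not_le)
  ultimately have "card S - 1 \<le> card T"
    by (rule card_le_card_Diff_le_one)
  then show ?thesis
    unfolding S_def T_def degree_def .
qed

end
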